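(* A replicated system $\mathcal P$ satisfies a stable termination property $\Pi$ if and only if $\mathcal P$ has a stage graph for $\Pi$.
   Context: A replicated system of arity $n$ is $\mathcal P=(Q,T)$ with $Q$ finite and $T\subseteq\bigcup_{k=0}^n Q^{(k)}\times Q^{(k)}$ ($Q^{(k)}$: multisets over $Q$ of size $k$) containing all silent transitions $(\vec x,\vec x)$. For $t=(\vec x,\vec y)$: $\mathrm{pre}(t)=\vec x$, $\Delta(t)=\vec y-\vec x$. Configurations are $C\in\mathbb N^Q$; $t$ is enabled at $C$ if $C\ge\mathrm{pre}(t)$ and then $C\xrightarrow{t}C+\Delta(t)$; $\to$ is the union over $t$, $\xrightarrow{*}$ its reflexive-transitive closure. A run is an infinite sequence $C_0t_1C_1\cdots$ of steps; it is fair if for every possible step $C\xrightarrow{t}C'$, if $C$ occurs infinitely often then the segment $C\,t\,C'$ occurs infinitely often. Presburger formulas over $Q$ define sets $[\![\phi]\!]\subseteq\mathbb N^Q$. A stable termination property is $\Pi=(\phi_{pre},\{\phi^1_{post},\dots,\phi^k_{post}\})$ with all components Presburger formulas over $Q$; $\mathcal P$ satisfies $\Pi$ if every fair run starting at a configuration of $[\![\phi_{pre}]\!]$ satisfies $\Diamond\bigvee_{i=1}^k\Box\phi^i_{post}$ (i.e.\ from some point on all configurations satisfy $\phi^i_{post}$ for some fixed $i$). A set $\mathcal C$ is inductive if $C\in\mathcal C$, $C\to C'$ imply $C'\in\mathcal C$. A certificate for $\mathcal C\leadsto\mathcal C'$ is $f:\mathcal C\to\mathbb N$ such that every $C\in\mathcal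 C\setminus\mathcal C'$ has an execution $C\xrightarrow{*}D$, $D\in\mathcal C$, $f(C)>f(D)$. A set $\mathcal C$ satisfies $\phi^i_{post}$ if every configuration of $\mathcal C$ satisfies it (for inductive $\mathcal C$ this is the same as satisfying $\Box\phi^i_{post}$). A stage graph of $\mathcal P$ for $\Pi$ is a finite directed acyclic graph whose nodes (stages) are sets of configurations such that: (1) every stage is inductive; (2) every configuration of $[\![\phi_{pre}]\!]$ belongs to some stage; (3) for every non-terminal stage $\mathcal C$ with successors $\mathcal C_1,\dots,\mathcal C_n$ there is a certificate for $\mathcal C\leadsto(\mathcal C_1\cup\dots\cup\mathcal C_n)$; (4) every terminal stage satisfies $\phi^i_{post}$ for some $i$. *)

theory Defs
  imports Main "HOL-Library.Multiset"
begin

text \<open>Linear terms: free variables are states q (counting the number of agents in q),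
  bound variables are de Bruijn indices.\<close>
datatype 'q pterm = PVar 'q | PBVar nat | PConst nat | PAdd "'q pterm" "'q pterm"

datatype 'q pform =
    PLe "'q pterm" "'q pterm"
  | PEq "'q pterm" "'q pterm"
  | PNot "'q pform"
  | PAnd "'q pform" "'q pform"
  | POr "'q pform" "'q pform"
  | PEx "'q pform"
  | PAll "'q pform"

fun pterm_eval :: "'q multiset \<Rightarrow> (nat \<Rightarrow> nat) \<Rightarrow> 'q pterm \<Rightarrow> nat" where
  "pterm_eval C e (PVar q) = count C q"
| "pterm_eval C e (PBVar i) = e i"
| "pterm_eval C e (PConst c) = c"
| "pterm_eval C e (PAdd s t) = pterm_eval C e s + pterm_eval C e t"

definition shift_env :: "nat \<Rightarrow> (nat \<Rightarrow> nat) \<Rightarrow> nat \<Rightarrow> nat" where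
  "shift_env n e = (\<lambda>i. if i = 0 then n else e (i - 1))"

fun pform_holds :: "'q multiset \<Rightarrow> (nat \<Rightarrow> nat) \<Rightarrow> 'q pform \<Rightarrow> bool" where
  "pform_holds C e (PLe s t) = (pterm_eval C e s \<le> pterm_eval C e t)"
| "pform_holds C e (PEq s t) = (pterm_eval C e s = pterm_eval C e t)"
| "pform_holds C e (PNot f) = (\<not> pform_holds C e f)"
| "pform_holds C e (PAnd f g) = (pform_holds C e f \<and> pform_holds C e g)"
| "pform_holds C e (POr f g) = (pform_holds C e f \<or> pform_holds C e g)"
| "pform_holds C e (PEx f) = (\<exists>n. pform_holds C (shift_env n e) f)"
| "pform_holds C e (PAll f) = (\<forall>n. pform_holds C (shift_env n e) f)"

text \<open>The set of configurations defined by a formula (unbound de Bruijn indices read as 0).\<close>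
definition denot :: "'q pform \<Rightarrow> 'q multiset set" where
  "denot f = {C. pform_holds C (\<lambda>_. 0) f}"

text \<open>States: the finite type 'q (Q = UNIV). Configurations: multisets over 'q.
  A transition is a pair (pre, post) of multisets.\<close>
type_synonym 'q transition = "'q multiset \<times> 'q multiset"

definition replicated_system :: "nat \<Rightarrow> ('q::finite) transition set \<Rightarrow> bool" where
  "replicated_system n T \<longleftrightarrow>
     (\<forall>(x, y) \<in> T. size x = size y \<and> size x \<le> n) \<and>
     (\<forall>x. size x \<le> n \<longrightarrow> (x, x) \<in> T)"

definition enabled :: "'q transition \<Rightarrow> 'q multiset \<Rightarrow> bool" where
  "enabled t C \<longleftrightarrow> fst t \<subseteq># C"

definition step_by :: "'q transition set \<Rightarrow> 'q multiset \<Rightarrow> 'q transition \<Rightarrow> 'q multiset \<Rightarrow> bool" where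
  "step_by T C t C' \<longleftrightarrow> t \<in> T \<and> enabled t C \<and> C' = C - fst t + snd t"

definition step :: "'q transition set \<Rightarrow> 'q multiset \<Rightarrow> 'q multiset \<Rightarrow> bool" where
  "step T C C' \<longleftrightarrow> (\<exists>t. step_by T C t C')"

abbreviation reach :: "'q transition set \<Rightarrow> 'q multiset \<Rightarrow> 'q multiset \<Rightarrow> bool" where
  "reach T \<equiv> (step T)\<^sup>*\<^sup>*"

text \<open>A run C_0 t_1 C_1 t_2 ...: cfg i is C_i, tr i is t_{i+1}.\<close>
definition is_run :: "'q transition set \<Rightarrow> (nat \<Rightarrow> 'q multiset) \<Rightarrow> (nat \<Rightarrow> 'q transition) \<Rightarrow> bool" where
  "is_run T cfg tr \<longleftrightarrow> (\<forall>i. step_by T (cfg i) (tr i) (cfg (Suc i)))"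

definition fair_run :: "'q transition set \<Rightarrow> (nat \<Rightarrow> 'q multiset) \<Rightarrow> (nat \<Rightarrow> 'q transition) \<Rightarrow> bool" where
  "fair_run T cfg tr \<longleftrightarrow> is_run T cfg tr \<and>
     (\<forall>C t C'. step_by T C t C' \<longrightarrow> (\<exists>\<^sub>\<infinity>i. cfg i = C) \<longrightarrow>
        (\<exists>\<^sub>\<infinity>i. cfg i = C \<and> tr i = t \<and> cfg (Suc i) = C'))"

definition satisfies_stp :: "'q transition set \<Rightarrow> 'q pform \<Rightarrow> 'q pform list \<Rightarrow> bool" where
  "satisfies_stp T pre posts \<longleftrightarrow>
     (\<forall>cfg tr. fair_run T cfg tr \<longrightarrow> cfg 0 \<in> denot pre \<longrightarrow>
        (\<exists>phi \<in> set posts. \<exists>N. \<forall>m\<ge>N. cfg m \<in> denot phi))"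

definition inductive_set_cfg :: "'q transition set \<Rightarrow> 'q multiset set \<Rightarrow> bool" where
  "inductive_set_cfg T S \<longleftrightarrow> (\<forall>C C'. C \<in> S \<longrightarrow> step T C C' \<longrightarrow> C' \<in> S)"

definition certificate :: "'q transition set \<Rightarrow> ('q multiset \<Rightarrow> nat) \<Rightarrow> 'q multiset set \<Rightarrow> 'q multiset set \<Rightarrow> bool" where
  "certificate T f S S' \<longleftrightarrow>
     (\<forall>C \<in> S - S'. \<exists>D. reach T C D \<and> D \<in> S \<and> f C > f D)"

definition stage_graph :: "'q transition set \<Rightarrow> 'q pform \<Rightarrow> 'q pform list \<Rightarrow>
    'q multiset set set \<Rightarrow> ('q multiset set \<times> 'q multiset set) set \<Rightarrow> bool" where
  "stage_graph T pre posts Stages E \<longleftrightarrow>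
     finite Stages \<and> E \<subseteq> Stages \<times> Stages \<and> acyclic E \<and>
     (\<forall>S \<in> Stages. inductive_set_cfg T S) \<and>
     (\<forall>C \<in> denot pre. \<exists>S \<in> Stages. C \<in> S) \<and>
     (\<forall>S \<in> Stages. E `` {S} \<noteq> {} \<longrightarrow> (\<exists>f. certificate T f S (\<Union>(E `` {S})))) \<and>
     (\<forall>S \<in> Stages. E `` {S} = {} \<longrightarrow> (\<exists>phi \<in> set posts. S \<subseteq> denot phi))"

definition has_stage_graph :: "'q transition set \<Rightarrow> 'q pform \<Rightarrow> 'q pform list \<Rightarrow> bool" where
  "has_stage_graph T pre posts \<longleftrightarrow> (\<exists>Stages E. stage_graph T pre posts Stages E)"

end

theory Submission
  imports Defs "HOL-Library.Infinite_Set"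
begin

text \<open>
  Soundness: the configurations visited infinitely often by a fair run form a bottom strongly
  connected component of the reachability graph (finite, since transitions preserve the number
  of agents), and the run eventually stays inside it. A bottom component meeting an inductive
  stage lies inside it, and it meets a successor of that stage: otherwise a configuration of the
  component with least certificate value would reach one of smaller value, still inside the
  component. Following the acyclic stage graph, the component ends up inside a terminal stage.

  Completeness: every configuration reaches a bottom component, and a fair run can be built that
  enters it and then cycles through all of its steps. Hence every configuration reachable from an
  initial one reaches a configuration from which some postcondition holds forever. These sets,
  one per postcondition, are the terminal stages; their only predecessor is the set of
  configurations reachable from an initial one, with the distance to them as certificate.
\<close>

lemma step_size:
  assumes "replicated_system n T" "step T C C'"
  shows "size C' = size C"
proof -
  obtain t where t: "t \<in> T" "fst t \<subseteq># C" "C' = C - fst t + snd t"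
    using assms(2) unfolding step_def step_by_def enabled_def by blast
  have "size (fst t) = size (snd t)"
    using assms(1) t(1) unfolding replicated_system_def by (cases t) auto
  moreover have "size (fst t) \<le> size C" using t(2) by (rule size_mset_mono)
  ultimately show ?thesis by (simp add: t(3) size_Diff_submset[OF t(2)])
qed

lemma reach_size:
  assumes "replicated_system n T" "reach T C D"
  shows "size D = size C"
  using assms(2) by induction (auto dest: step_size[OF assms(1)])

lemma finite_reach:
  assumes "replicated_system n T"
  shows "finite {D. reach T (C :: ('q::finite) multiset) D}"
proof (rule finite_subset)
  show "{D. reach T C D} \<subseteq> multisets_of_size UNIV (size C)"
    using reach_size[OF assms] unfolding multisets_of_size_def by auto
qed auto

lemma finite_transitions:
  assumes "replicated_system n (T :: ('q::finite) transition set)"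
  shows "finite T"
proof (rule finite_subset)
  let ?M = "\<Union>k\<le>n. multisets_of_size (UNIV :: 'q set) k"
  show "T \<subseteq> ?M \<times> ?M"
    using assms unfolding replicated_system_def multisets_of_size_def by fastforce
qed (intro finite_cartesian_product finite_UN_I; auto)

lemma silent_step:
  assumes "replicated_system n T"
  shows "step_by T C ({#}, {#}) C"
  using assms unfolding replicated_system_def step_by_def enabled_def by auto

lemma inductive_set_cfg_reach:
  assumes "inductive_set_cfg T S" "C \<in> S" "reach T C D"
  shows "D \<in> S"
  using assms(3,2) by induction (use assms(1) in \<open>auto simp: inductive_set_cfg_def\<close>)

definition bottom_scc :: "'q transition set \<Rightarrow> 'q multiset set \<Rightarrow> bool" where
  "bottom_scc T I \<longleftrightarrow> I \<noteq> {} \<and>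
     (\<forall>X\<in>I. \<forall>Y. reach T X Y \<longrightarrow> Y \<in> I) \<and> (\<forall>X\<in>I. \<forall>Y\<in>I. reach T X Y)"

lemma bottom_scc_subset_inductive:
  assumes "bottom_scc T I" "inductive_set_cfg T S" "X \<in> I" "X \<in> S"
  shows "I \<subseteq> S"
proof
  fix Y assume "Y \<in> I"
  with assms(1,3) have "reach T X Y" unfolding bottom_scc_def by blast
  with assms(2,4) show "Y \<in> S" by (rule inductive_set_cfg_reach)
qed

lemma bottom_scc_meets_certified_target:
  assumes I: "bottom_scc T I" and "I \<subseteq> S" and f: "certificate T f S U"
  shows "I \<inter> U \<noteq> {}"
proof -
  obtain X0 where "X0 \<in> I" using I unfolding bottom_scc_def by blast
  then obtain X where X: "X \<in> I" and least: "\<And>Y. Y \<in> I \<Longrightarrow> f X \<le> f Y"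
    using ex_has_least_nat[of "\<lambda>X. X \<in> I" X0 f] by blast
  show ?thesis
  proof
    assume "I \<inter> U = {}"
    with X \<open>I \<subseteq> S\<close> have "X \<in> S - U" by blast
    then obtain D where "reach T X D" "f D < f X"
      using f unfolding certificate_def by blast
    moreover from this(1) have "D \<in> I" using I X unfolding bottom_scc_def by blast
    ultimately show False using least by (meson leD)
  qed
qed

lemma stage_graph_terminal_stage:
  assumes sg: "stage_graph T pre posts Stages E" and I: "bottom_scc T I"
    and "S \<in> Stages" "I \<subseteq> S"
  shows "\<exists>S'\<in>Stages. E `` {S'} = {} \<and> I \<subseteq> S'"
proof -
  have "E \<subseteq> Stages \<times> Stages" "finite Stages" "acyclic E"
    using sg unfolding stage_graph_def by blast+
  then have "finite E" "acyclic E" by (auto intro: finite_subset)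
  then have "wf (E\<inverse>)" by (rule finite_acyclic_wf_converse)
  then show ?thesis
    using assms(3,4)
  proof (induction S rule: wf_induct_rule)
    case (less S)
    show ?case
    proof (cases "E `` {S} = {}")
      case False
      then obtain f where "certificate T f S (\<Union>(E `` {S}))"
        using sg less.prems(1) unfolding stage_graph_def by blast
      then obtain X S' where "X \<in> I" "(S, S') \<in> E" "X \<in> S'"
        using bottom_scc_meets_certified_target[OF I less.prems(2)] by blast
      moreover from this have "S' \<in> Stages" "inductive_set_cfg T S'"
        using sg unfolding stage_graph_def by blast+
      ultimately show ?thesis
        using less.IH bottom_scc_subset_inductive[OF I] by (meson converse_iff)
    qed (use less.prems in blast)
  qed
qed

section \<open>Soundness\<close>

definition inf_visited :: "(nat \<Rightarrow> 'a) \<Rightarrow> 'a set" where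
  "inf_visited cfg = {X. \<exists>\<^sub>\<infinity>i. cfg i = X}"

lemma eventually_inf_visited:
  assumes "finite (range cfg)"
  shows "\<forall>\<^sub>\<infinity>i. cfg i \<in> inf_visited cfg"
proof -
  have "\<forall>X \<in> range cfg - inf_visited cfg. \<forall>\<^sub>\<infinity>i. cfg i \<noteq> X"
    unfolding inf_visited_def by (simp add: not_INFM)
  then have "\<forall>\<^sub>\<infinity>i. \<forall>X \<in> range cfg - inf_visited cfg. cfg i \<noteq> X"
    using assms by (simp add: eventually_ball_finite)
  then show ?thesis by (rule MOST_mono) blast
qed

lemma run_reach:
  assumes "is_run T cfg tr" "i \<le> j"
  shows "reach T (cfg i) (cfg j)"
  using assms(2)
proof (induction j rule: dec_induct)
  case (step j)
  moreover have "step T (cfg j) (cfg (Suc j))"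
    using assms(1) unfolding is_run_def step_def by blast
  ultimately show ?case by simp
qed simp

lemma fair_run_inf_visited_step:
  assumes "fair_run T cfg tr" "X \<in> inf_visited cfg" "step T X Y"
  shows "Y \<in> inf_visited cfg"
proof -
  obtain t where "step_by T X t Y" using assms(3) unfolding step_def by blast
  then have "\<exists>\<^sub>\<infinity>i. cfg i = X \<and> tr i = t \<and> cfg (Suc i) = Y"
    using assms(1,2) unfolding fair_run_def inf_visited_def by blast
  then have "\<exists>\<^sub>\<infinity>i. cfg (Suc i) = Y" by (rule INFM_mono) simp
  then have "\<forall>m. \<exists>i>m. cfg i = Y" unfolding INFM_nat using Suc_lessD less_SucI by blast
  then show ?thesis unfolding inf_visited_def INFM_nat by blast
qed

lemma fair_run_bottom_scc:
  assumes rs: "replicated_system n (T :: ('q::finite) transition set)"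
    and fair: "fair_run T cfg tr"
  shows "bottom_scc T (inf_visited cfg)" and "\<forall>\<^sub>\<infinity>i. cfg i \<in> inf_visited cfg"
proof -
  have run: "is_run T cfg tr" using fair unfolding fair_run_def by blast
  have "range cfg \<subseteq> {D. reach T (cfg 0) D}" using run_reach[OF run] by blast
  then have "finite (range cfg)" using finite_subset finite_reach[OF rs] by blast
  then show eventually: "\<forall>\<^sub>\<infinity>i. cfg i \<in> inf_visited cfg" by (rule eventually_inf_visited)
  have "inf_visited cfg \<noteq> {}" using eventually unfolding MOST_nat by fastforce
  moreover have "Y \<in> inf_visited cfg" if "X \<in> inf_visited cfg" "reach T X Y" for X Y
    using that(2,1) by induction (auto intro: fair_run_inf_visited_step[OF fair])
  moreover have "reach T X Y" if X: "X \<in> inf_visited cfg" and Y: "Y \<in> inf_visited cfg" for X Y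
  proof -
    obtain i where "cfg i = X" using X unfolding inf_visited_def INFM_nat by blast
    moreover obtain j where "j > i" "cfg j = Y"
      using Y unfolding inf_visited_def INFM_nat by blast
    ultimately show ?thesis using run_reach[OF run, of i j] by simp
  qed
  ultimately show "bottom_scc T (inf_visited cfg)" unfolding bottom_scc_def by blast
qed

lemma stage_graph_sound:
  assumes rs: "replicated_system n (T :: ('q::finite) transition set)"
    and sg: "stage_graph T pre posts Stages E"
  shows "satisfies_stp T pre posts"
  unfolding satisfies_stp_def
proof (intro allI impI)
  fix cfg tr assume fair: "fair_run T cfg tr" and "cfg 0 \<in> denot pre"
  let ?I = "inf_visited cfg"
  have bottom: "bottom_scc T ?I" by (rule fair_run_bottom_scc(1)[OF rs fair])
  obtain S where S: "S \<in> Stages" "cfg 0 \<in> S" "inductive_set_cfg T S"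
    using sg \<open>cfg 0 \<in> denot pre\<close> unfolding stage_graph_def by blast
  obtain N where N: "\<forall>m>N. cfg m \<in> ?I"
    using fair_run_bottom_scc(2)[OF rs fair] unfolding MOST_nat by blast
  have "is_run T cfg tr" using fair unfolding fair_run_def by blast
  then have "cfg (Suc N) \<in> S"
    using S(2,3) run_reach[of T cfg tr 0 "Suc N"] inductive_set_cfg_reach by auto
  then have "?I \<subseteq> S"
    using bottom_scc_subset_inductive[OF bottom S(3)] N by blast
  then obtain S' where "S' \<in> Stages" "E `` {S'} = {}" "?I \<subseteq> S'"
    using stage_graph_terminal_stage[OF sg bottom S(1)] by blast
  then obtain phi where "phi \<in> set posts" "?I \<subseteq> denot phi"
    using sg unfolding stage_graph_def by blast
  with N show "\<exists>phi\<in>set posts. \<exists>N. \<forall>m\<ge>N. cfg m \<in> denot phi"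
    by (meson Suc_le_lessD subsetD)
qed

section \<open>Fair runs into a bottom component\<close>

fun is_path :: "'q transition set \<Rightarrow> 'q multiset \<Rightarrow>
    ('q multiset \<times> 'q transition \<times> 'q multiset) list \<Rightarrow> 'q multiset \<Rightarrow> bool" where
  "is_path T C [] D \<longleftrightarrow> C = D"
| "is_path T C ((X, t, Y) # ps) D \<longleftrightarrow> X = C \<and> step_by T X t Y \<and> is_path T Y ps D"

lemma is_path_append:
  "is_path T C (ps @ qs) E \<longleftrightarrow> (\<exists>D. is_path T C ps D \<and> is_path T D qs E)"
proof (induction ps arbitrary: C)
  case (Cons s ps)
  then show ?case by (cases s) auto
qed simp

lemma reach_is_path:
  assumes "reach T C D"
  shows "\<exists>ps. is_path T C ps D"
  using assms
proof (induction rule: converse_rtranclp_induct)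
  case base
  have "is_path T D [] D" by simp
  then show ?case ..
next
  case (step C C')
  then obtain ps t where "is_path T C' ps D" "step_by T C t C'" unfolding step_def by blast
  then have "is_path T C ((C, t, C') # ps) D" by simp
  then show ?case ..
qed

lemma is_path_nth_0:
  assumes "is_path T C ps D" "ps \<noteq> []"
  shows "fst (ps ! 0) = C"
  using assms by (cases ps) auto

lemma is_path_nth:
  assumes "is_path T C ps D" "i < length ps" "ps ! i = (X, t, Y)"
  shows "step_by T X t Y \<and> Y = (if Suc i < length ps then fst (ps ! Suc i) else D)"
  using assms
proof (induction ps arbitrary: C i)
  case (Cons s ps)
  show ?case
  proof (cases i)
    case 0
    with Cons.prems have "is_path T Y ps D" "step_by T X t Y" by (cases s; auto)+
    then show ?thesis using 0 is_path_nth_0 by (cases ps) auto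
  next
    case (Suc j)
    obtain Y' where "is_path T Y' ps D" using Cons.prems(1) by (cases s) auto
    then have "step_by T X t Y \<and> Y = (if Suc j < length ps then fst (ps ! Suc j) else D)"
      by (rule Cons.IH) (use Cons.prems(2,3) Suc in auto)
    with Suc show ?thesis by auto
  qed
qed simp

lemma is_path_cycle_covering:
  assumes bottom: "\<forall>D. reach T b D \<longrightarrow> reach T D b" and "finite F"
    and "\<forall>(X, t, Y)\<in>F. reach T b X \<and> step_by T X t Y"
  shows "\<exists>c. is_path T b c b \<and> F \<subseteq> set c"
  using assms(2,3)
proof (induction F rule: finite_induct)
  case empty
  have "is_path T b [] b" by simp
  then show ?case by blast
next
  case (insert s F)
  obtain X t Y where s: "s = (X, t, Y)" by (cases s)
  obtain c where c: "is_path T b c b" "F \<subseteq> set c" using insert by auto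
  have X: "reach T b X" and st: "step_by T X t Y" using insert.prems s by auto
  obtain p where p: "is_path T b p X" using reach_is_path[OF X] by blast
  have "reach T b Y" using X st by (meson rtranclp.rtrancl_into_rtrancl step_def)
  then obtain q where q: "is_path T Y q b" using reach_is_path bottom by blast
  have "is_path T b (p @ [(X, t, Y)] @ q @ c) b" using p q c st by (auto simp: is_path_append)
  moreover have "insert s F \<subseteq> set (p @ [(X, t, Y)] @ q @ c)" using c s by auto
  ultimately show ?case by blast
qed

definition lasso :: "'a list \<Rightarrow> 'a list \<Rightarrow> nat \<Rightarrow> 'a" where
  "lasso p c i = (if i < length p then p ! i else c ! ((i - length p) mod length c))"

lemma lasso_infinitely_often:
  assumes "c \<noteq> []" "x \<in> set c"
  shows "\<exists>\<^sub>\<infinity>i. lasso p c i = x"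
  unfolding INFM_nat
proof
  fix m
  obtain j where j: "j < length c" "c ! j = x" using assms(2) by (auto simp: in_set_conv_nth)
  have "m < Suc m * length c" using assms(1) by (cases "length c") auto
  then have "length p + Suc m * length c + j > m" by linarith
  moreover have "lasso p c (length p + Suc m * length c + j) = x" using j by (simp add: lasso_def)
  ultimately show "\<exists>i>m. lasso p c i = x" by blast
qed

lemma lasso_step:
  assumes p: "is_path T C p b" and c: "is_path T b c b" "c \<noteq> []"
    and w: "lasso p c i = (X, t, Y)"
  shows "step_by T X t Y" and "fst (lasso p c (Suc i)) = Y"
proof -
  have c0: "fst (c ! 0) = b" using is_path_nth_0[OF c] .
  have "step_by T X t Y \<and> fst (lasso p c (Suc i)) = Y"
  proof (cases "i < length p")
    case True
    then have "p ! i = (X, t, Y)" using w by (simp add: lasso_def)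
    with is_path_nth[OF p True] c0 True show ?thesis by (auto simp: lasso_def)
  next
    case False
    define k where "k = (i - length p) mod length c"
    have k: "k < length c" "c ! k = (X, t, Y)" using False w c(2) by (simp_all add: k_def lasso_def)
    have "lasso p c (Suc i) = c ! (Suc k mod length c)"
      using False by (simp add: lasso_def k_def Suc_diff_le mod_Suc_eq)
    moreover have "Suc k mod length c = (if Suc k < length c then Suc k else 0)"
      using k(1) by (cases "Suc k = length c") auto
    ultimately show ?thesis using is_path_nth[OF c(1) k] c0 by auto
  qed
  then show "step_by T X t Y" "fst (lasso p c (Suc i)) = Y" by blast+
qed

lemma lasso_ends:
  assumes "is_path T C p b" "is_path T b c b" "c \<noteq> []"
  shows "fst (lasso p c 0) = C" and "fst (lasso p c (length p)) = b"
  using assms is_path_nth_0[OF assms(2,3)] is_path_nth_0[OF assms(1)]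
  by (auto simp: lasso_def)

lemma fair_run_into_bottom:
  assumes rs: "replicated_system n (T :: ('q::finite) transition set)"
    and p: "is_path T C p b" and bottom: "\<forall>D. reach T b D \<longrightarrow> reach T D b"
  shows "\<exists>cfg tr. fair_run T cfg tr \<and> cfg 0 = C \<and> (\<forall>X. reach T b X \<longrightarrow> (\<exists>\<^sub>\<infinity>i. cfg i = X))"
proof -
  define F where "F = {(X, t, Y). reach T b X \<and> step_by T X t Y}"
  have "reach T b Y \<and> t \<in> T" if "reach T b X" "step_by T X t Y" for X t Y
    using that by (meson rtranclp.rtrancl_into_rtrancl step_def step_by_def)
  then have "F \<subseteq> {X. reach T b X} \<times> T \<times> {Y. reach T b Y}" unfolding F_def by auto
  moreover have "finite ({X. reach T b X} \<times> T \<times> {Y. reach T b Y})"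
    using finite_reach[OF rs] finite_transitions[OF rs] by blast
  ultimately have "finite F" by (rule finite_subset)
  then obtain c where c: "is_path T b c b" "F \<subseteq> set c"
    using is_path_cycle_covering[OF bottom] unfolding F_def by auto
  have silent: "(X, ({#}, {#}), X) \<in> F" if "reach T b X" for X
    using that silent_step[OF rs] unfolding F_def by auto
  then have "c \<noteq> []" using c(2) by fastforce
  define cfg where "cfg i = fst (lasso p c i)" for i
  define tr where "tr i = fst (snd (lasso p c i))" for i
  have inf: "\<exists>\<^sub>\<infinity>i. lasso p c i = s" if "s \<in> F" for s
    using lasso_infinitely_often[OF \<open>c \<noteq> []\<close>] c(2) that by blast
  have run: "is_run T cfg tr"
    unfolding is_run_def cfg_def tr_def
    using lasso_step[OF p c(1) \<open>c \<noteq> []\<close>] by (metis prod.collapse)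
  have fair: "fair_run T cfg tr" unfolding fair_run_def
  proof (intro conjI run allI impI)
    fix X t Y assume st: "step_by T X t Y" and "\<exists>\<^sub>\<infinity>i. cfg i = X"
    then obtain i where "i > length p" "cfg i = X" unfolding INFM_nat by blast
    then have "reach T b X"
      using run_reach[OF run, of "length p" i] lasso_ends(2)[OF p c(1) \<open>c \<noteq> []\<close>]
      by (simp add: cfg_def)
    with st have "\<exists>\<^sub>\<infinity>i. lasso p c i = (X, t, Y)" by (intro inf) (simp add: F_def)
    then show "\<exists>\<^sub>\<infinity>i. cfg i = X \<and> tr i = t \<and> cfg (Suc i) = Y"
      by (rule INFM_mono) (simp add: cfg_def tr_def lasso_step(2)[OF p c(1) \<open>c \<noteq> []\<close>])
  qed
  have "\<exists>\<^sub>\<infinity>i. cfg i = X" if "reach T b X" for X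
    using inf[OF silent[OF that]] by (rule INFM_mono) (simp add: cfg_def)
  with fair show ?thesis using lasso_ends(1)[OF p c(1) \<open>c \<noteq> []\<close>] unfolding cfg_def by blast
qed

lemma reach_bottom:
  assumes rs: "replicated_system n (T :: ('q::finite) transition set)"
  shows "\<exists>b. reach T C b \<and> (\<forall>D. reach T b D \<longrightarrow> reach T D b)"
proof -
  define R where "R X = {D. reach T X D}" for X
  obtain b where b: "reach T C b" and least: "\<And>D. reach T C D \<Longrightarrow> card (R b) \<le> card (R D)"
    using ex_has_least_nat[of "reach T C", OF rtranclp.rtrancl_refl, of "\<lambda>X. card (R X)"]
    by blast
  have "reach T D b" if D: "reach T b D" for D
  proof -
    have sub: "R D \<subseteq> R b" unfolding R_def using D by (auto intro: rtranclp_trans)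
    have fin: "finite (R b)" unfolding R_def by (rule finite_reach[OF rs])
    have "reach T C D" using b D by (rule rtranclp_trans)
    then have "card (R b) \<le> card (R D)" by (rule least)
    then have "card (R D) = card (R b)" using card_mono[OF fin sub] by linarith
    then have "R D = R b" by (rule card_subset_eq[OF fin sub])
    moreover have "b \<in> R b" unfolding R_def by simp
    ultimately show ?thesis unfolding R_def by blast
  qed
  with b show ?thesis by blast
qed

section \<open>Completeness\<close>

definition reach_set :: "'q transition set \<Rightarrow> 'q multiset set \<Rightarrow> 'q multiset set" where
  "reach_set T A = {D. \<exists>C\<in>A. reach T C D}"

definition stable_in :: "'q transition set \<Rightarrow> 'q multiset set \<Rightarrow> 'q multiset set" where
  "stable_in T P = {D. \<forall>F. reach T D F \<longrightarrow> F \<in> P}"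

lemma inductive_reach_set: "inductive_set_cfg T (reach_set T A)"
  unfolding inductive_set_cfg_def reach_set_def by (auto intro: rtranclp.rtrancl_into_rtrancl)

lemma inductive_stable_in: "inductive_set_cfg T (stable_in T P)"
  unfolding inductive_set_cfg_def stable_in_def by (auto intro: converse_rtranclp_into_rtranclp)

lemma stable_in_subset: "stable_in T P \<subseteq> P"
  unfolding stable_in_def by auto

lemma satisfies_stp_reach_stable:
  assumes rs: "replicated_system n (T :: ('q::finite) transition set)"
    and sat: "satisfies_stp T pre posts"
    and "C \<in> denot pre" and "reach T C D"
  shows "\<exists>phi\<in>set posts. \<exists>E\<in>stable_in T (denot phi). reach T D E"
proof -
  obtain b where b: "reach T D b" "\<forall>X. reach T b X \<longrightarrow> reach T X b"
    using reach_bottom[OF rs] by blast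
  then have "reach T C b" using assms(4) by simp
  then obtain p where "is_path T C p b" using reach_is_path by blast
  then obtain cfg tr where "fair_run T cfg tr" "cfg 0 = C"
      and visits: "\<forall>X. reach T b X \<longrightarrow> (\<exists>\<^sub>\<infinity>i. cfg i = X)"
    using fair_run_into_bottom[OF rs _ b(2)] by blast
  then obtain phi N where phi: "phi \<in> set posts" "\<forall>m\<ge>N. cfg m \<in> denot phi"
    using sat \<open>C \<in> denot pre\<close> unfolding satisfies_stp_def by auto
  have "b \<in> stable_in T (denot phi)" unfolding stable_in_def
  proof (intro CollectI allI impI)
    fix F assume "reach T b F"
    then obtain i where "i > N" "cfg i = F" using visits unfolding INFM_nat by blast
    then show "F \<in> denot phi" using phi(2) by auto
  qed
  with b(1) phi(1) show ?thesis by blast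
qed

lemma certificate_distance:
  assumes S: "inductive_set_cfg T S" and reach: "\<forall>C\<in>S - U. \<exists>D\<in>U. reach T C D"
  shows "certificate T (\<lambda>C. LEAST k. \<exists>D\<in>U. (step T ^^ k) C D) S U"
  unfolding certificate_def
proof
  let ?f = "\<lambda>C. LEAST k. \<exists>D\<in>U. (step T ^^ k) C D"
  fix C assume C: "C \<in> S - U"
  then obtain D k where "D \<in> U" "(step T ^^ k) C D" using reach by (metis rtranclp_power)
  then have "\<exists>D\<in>U. (step T ^^ ?f C) C D" using LeastI[of "\<lambda>k. \<exists>D\<in>U. (step T ^^ k) C D" k] by blast
  then obtain D where D: "D \<in> U" "(step T ^^ ?f C) C D" by blast
  with C obtain k where k: "?f C = Suc k" by (cases "?f C") auto
  then obtain C' where C': "step T C C'" "(step T ^^ k) C' D" using D(2) by (metis relpowp_Suc_D2)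
  have "?f C' \<le> k" using C'(2) D(1) by (blast intro: Least_le)
  moreover have "C' \<in> S" using S C C'(1) unfolding inductive_set_cfg_def by blast
  moreover have "reach T C C'" using C'(1) by simp
  ultimately show "\<exists>C'. reach T C C' \<and> C' \<in> S \<and> ?f C > ?f C'" using k by auto
qed

lemma stage_graph_two_levels:
  assumes S0: "inductive_set_cfg T S0" "denot pre \<subseteq> S0"
    and A: "\<And>phi. phi \<in> set posts \<Longrightarrow> inductive_set_cfg T (A phi) \<and> A phi \<subseteq> denot phi \<and> A phi \<noteq> S0"
    and "set posts \<noteq> {}"
    and reach: "\<forall>C\<in>S0 - \<Union>(A ` set posts). \<exists>D\<in>\<Union>(A ` set posts). reach T C D"
  shows "stage_graph T pre posts (insert S0 (A ` set posts)) ((\<lambda>phi. (S0, A phi)) ` set posts)"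
    (is "stage_graph _ _ _ _ ?E")
proof -
  have succ: "?E `` {S} = (if S = S0 then A ` set posts else {})" for S by auto
  have "x = S0 \<and> y \<noteq> S0" if "(x, y) \<in> ?E\<^sup>+" for x y
    using that A by induction auto
  then have "acyclic ?E" unfolding acyclic_def by blast
  then show ?thesis unfolding stage_graph_def
    using S0 A \<open>set posts \<noteq> {}\<close> certificate_distance[OF S0(1) reach]
    by (auto simp: succ)
qed

lemma stage_graph_complete:
  assumes rs: "replicated_system n (T :: ('q::finite) transition set)"
    and sat: "satisfies_stp T pre posts"
  shows "has_stage_graph T pre posts"
  unfolding has_stage_graph_def
proof (cases "denot pre = {}")
  case True
  then have "stage_graph T pre posts {} {}" unfolding stage_graph_def acyclic_def by auto
  then show "\<exists>Stages E. stage_graph T pre posts Stages E" by blast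
next
  case False
  let ?S0 = "reach_set T (denot pre)"
  let ?A = "\<lambda>phi. stable_in T (denot phi)"
  have S0: "inductive_set_cfg T ?S0" "denot pre \<subseteq> ?S0"
    using inductive_reach_set unfolding reach_set_def by auto
  have stable: "\<exists>D\<in>\<Union>(?A ` set posts). reach T C D" if C: "C \<in> ?S0" for C
  proof -
    obtain C0 where "C0 \<in> denot pre" "reach T C0 C" using C unfolding reach_set_def by blast
    then show ?thesis using satisfies_stp_reach_stable[OF rs sat] by blast
  qed
  obtain C where "C \<in> denot pre" using False by blast
  then have "C \<in> ?S0" using S0(2) by blast
  then have "set posts \<noteq> {}" using stable[of C] by auto
  show "\<exists>Stages E. stage_graph T pre posts Stages E"
  proof (cases "\<exists>phi\<in>set posts. ?S0 \<subseteq> denot phi")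
    case True
    then have "stage_graph T pre posts {?S0} {}"
      using S0 unfolding stage_graph_def acyclic_def by auto
    then show ?thesis by blast
  next
    case False
    have "stage_graph T pre posts (insert ?S0 (?A ` set posts)) ((\<lambda>phi. (?S0, ?A phi)) ` set posts)"
    proof (rule stage_graph_two_levels[OF S0 _ \<open>set posts \<noteq> {}\<close>])
      show "inductive_set_cfg T (?A phi) \<and> ?A phi \<subseteq> denot phi \<and> ?A phi \<noteq> ?S0"
        if "phi \<in> set posts" for phi
        using False that inductive_stable_in stable_in_subset by blast
      show "\<forall>C\<in>?S0 - \<Union>(?A ` set posts). \<exists>D\<in>\<Union>(?A ` set posts). reach T C D"
        using stable by simp
    qed
    then show ?thesis by blast
  qed
qed

theorem proposition3:
  fixes T :: "('q::finite) transition set" and n :: nat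
    and pre :: "'q pform" and posts :: "'q pform list"
  assumes "replicated_system n T"
  shows "satisfies_stp T pre posts \<longleftrightarrow> has_stage_graph T pre posts"
  using stage_graph_sound[OF assms] stage_graph_complete[OF assms]
  unfolding has_stage_graph_def by blast

end
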